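(* Let $1\le N\le M$ and $0\le n\le N$; let $u_1,\dots,u_n$, $v_1,\dots,v_N$, $w_1,\dots,w_M$ be rapidities with associated external fields $p_1,\dots,p_n$, $q_1,\dots,q_N$, $r_1,\dots,r_M$ (all complex), and put $\widetilde N=N-n$. Define $$S_n=S_n(\{u,p\}_n,\{v,q\}_N,\{w,r\}_M)=\langle\Downarrow_{\widetilde N/M}|\,C(u_n,p_n)\cdots C(u_1,p_1)\,B(v_N,q_N)\cdots B(v_1,q_1)\,|\Uparrow_M\rangle,$$ where $B(v,q)=B(v,q,\{w,r\}_M)$, $C(u,p)=C(u,p,\{w,r\}_M)$ (for $n=0$ there are no $C$-operators; for $n=N$ the bra is $\langle\Uparrow_M|$). Then for all $1\le n\le N$: (1) $S_n$ is invariant under the simultaneous exchange $(w_j,r_j)\leftrightarrow(w_k,r_k)$ for all $j,k\in\{\widetilde N+1,\dots,M\}$; (2) $S_n$ is a trigonometric polynomial of degree $M-1$ in $u_n$, vanishing at the points $u_n=p_n+w_j+r_j$ for all $1\le j\le\widetilde N$; (3) at $u_n+p_n=w_{\widetilde N+1}+r_{\widetilde N+1}$, $$S_n=[2p_n]^{\frac12}[2r_{\widetilde N+1}]^{\frac12}\prod_{1\le j<\widetilde N+1}[w_j-w_{\widetilde N+1}+r_j-r_{\widetilde N+1}+2p_n]\prod_{\widetilde N+1<j\le M}[w_{\widetilde N+1}-w_j+r_j+r_{\widetilde N+1}]\;S_{n-1},$$ where $S_{n-1}=S_{n-1}(\{u,p\}_{n-1},\{v,q\}_N,\{w,r\}_M)$.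 In addition, (4) $\displaystyle S_0(\{v,q\}_N,\{w,r\}_M)=\prod_{j=1}^{N}\prod_{k=N+1}^{M}[v_j-w_k+q_j-r_k]\;Z_N(\{v,q\}_N,\{w,r\}_N)$, where $Z_N(\{v,q\}_N,\{w,r\}_N)=\langle\Downarrow_N|B(v_N,q_N,\{w,r\}_N)\cdots B(v_1,q_1,\{w,r\}_N)|\Uparrow_N\rangle$ is computed on the chain with the $N$ sites $V_1,\dots,V_N$ carrying $(w_1,r_1),\dots,(w_N,r_N)$.
   Context: Notation: $[x]=\sinh x$; square roots $[2p]^{1/2}$ denote a fixed choice used consistently. Each site space $V_m\cong\mathbb{C}^2$ has basis $\uparrow=(1,0)^T$, $\downarrow=(0,1)^T$ and dual basis $\uparrow^*,\downarrow^*$. States: $|\Uparrow_M\rangle=\bigotimes_{m=1}^M\uparrow_m$, $\langle\Uparrow_M|=\bigotimes_m\uparrow^*_m$, $\langle\Downarrow_N|=\bigotimes_{m=1}^N\downarrow^*_m$, and $\langle\Downarrow_{K/M}|=\bigotimes_{m\le K}\downarrow^*_m\otimes\bigotimes_{K<m\le M}\uparrow^*_m$. The trigonometric Felderhof $R$-matrix $R_{ab}(u,p,v,q)\in\mathrm{End}(V_a\otimes V_b)$ is, in the ordered basis $(\uparrow\uparrow,\uparrow\downarrow,\downarrow\uparrow,\downarrow\downarrow)$ (first factor $V_a$), $$\begin{pmatrix}a_+&0&0&0\\0&b_+&c_+&0\\0&c_-&b_-&0\\0&0&0&a_-\end{pmatrix},\quad a_\pm=[\pm(u-v)+p+q],\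 b_\pm=[u-v\pm(q-p)],\ c_\pm=[2p]^{\frac12}[2q]^{\frac12}.$$ The monodromy matrix is $T_a(u,p,\{w,r\}_M)=R_{a1}(u,p,w_1,r_1)\cdots R_{aM}(u,p,w_M,r_M)$, written as $\begin{pmatrix}A(u,p,\{w,r\}_M)&B(u,p,\{w,r\}_M)\\C(u,p,\{w,r\}_M)&D(u,p,\{w,r\}_M)\end{pmatrix}_a$ in $V_a$ (rows/columns indexed by $\uparrow,\downarrow$), with entries operators on $V_1\otimes\cdots\otimes V_M$. A function is a trigonometric polynomial of degree $d$ in $x$ if it equals $\sum_{k=0}^d c_k e^{(2k-d)x}$ with coefficients independent of $x$. *)

theory Defs
  imports Complex_Main
begin

text \<open>Spin convention: False = up, True = down.  A basis configuration of an
M-site chain is a bool list of length M.  Operators on the chain are given by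
their matrix elements  O out in.\<close>

definition brk :: "complex \<Rightarrow> complex" where
  "brk x = sinh x"

definition sqbrk2 :: "complex \<Rightarrow> complex" where
  "sqbrk2 p = csqrt (brk (2 * p))"

text \<open>Entry of the Felderhof R-matrix R(u,p,v,q): row (a', b'), column (a, b),
first factor auxiliary space V_a.\<close>
fun Rent :: "complex \<Rightarrow> complex \<Rightarrow> complex \<Rightarrow> complex \<Rightarrow> bool \<Rightarrow> bool \<Rightarrow> bool \<Rightarrow> bool \<Rightarrow> complex" where
  "Rent u p v q False False False False = brk ((u - v) + p + q)"
| "Rent u p v q True True True True = brk (-(u - v) + p + q)"
| "Rent u p v q False True False True = brk (u - v + (q - p))"
| "Rent u p v q True False True False = brk (u - v - (q - p))"
| "Rent u p v q False True True False = sqbrk2 p * sqbrk2 q"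
| "Rent u p v q True False False True = sqbrk2 p * sqbrk2 q"
| "Rent u p v q a b c d = 0"

text \<open>Matrix element of the monodromy entry T(u,p)_{alpha beta} between chain
configurations sigma' (out) and sigma (in):
 mono u p ws alpha beta sigma' sigma, with ws the list of (w_m, r_m).
T = R_{a1} ... R_{aM}.\<close>
fun mono :: "complex \<Rightarrow> complex \<Rightarrow> (complex \<times> complex) list \<Rightarrow> bool \<Rightarrow> bool \<Rightarrow> bool list \<Rightarrow> bool list \<Rightarrow> complex" where
  "mono u p [] a b [] [] = (if a = b then 1 else 0)"
| "mono u p ((w, r) # ws) a b (s' # ss') (s # ss) =
     (\<Sum>g\<in>{False, True}. Rent u p w r a s' g s * mono u p ws g b ss' ss)"
| "mono u p ws a b ss' ss = 0"

definition opB :: "complex \<Rightarrow> complex \<Rightarrow> (complex \<times> complex) list \<Rightarrow> bool list \<Rightarrow> bool list \<Rightarrow> complex" where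
  "opB v q ws = mono v q ws False True"

definition opC :: "complex \<Rightarrow> complex \<Rightarrow> (complex \<times> complex) list \<Rightarrow> bool list \<Rightarrow> bool list \<Rightarrow> complex" where
  "opC u p ws = mono u p ws True False"

definition actOp :: "nat \<Rightarrow> (bool list \<Rightarrow> bool list \<Rightarrow> complex) \<Rightarrow> (bool list \<Rightarrow> complex) \<Rightarrow> bool list \<Rightarrow> complex" where
  "actOp M Op psi = (\<lambda>s'. \<Sum>s\<in>{xs. length xs = M}. Op s' s * psi s)"

definition allUp :: "nat \<Rightarrow> bool list \<Rightarrow> complex" where
  "allUp M = (\<lambda>s. if s = replicate M False then 1 else 0)"

definition sites :: "nat \<Rightarrow> (nat \<Rightarrow> complex) \<Rightarrow> (nat \<Rightarrow> complex) \<Rightarrow> (complex \<times> complex) list" where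
  "sites M w r = map (\<lambda>j. (w j, r j)) [1..<M+1]"

definition Sfun :: "nat \<Rightarrow> (nat \<Rightarrow> complex) \<Rightarrow> (nat \<Rightarrow> complex) \<Rightarrow> nat \<Rightarrow> (nat \<Rightarrow> complex) \<Rightarrow> (nat \<Rightarrow> complex)
     \<Rightarrow> nat \<Rightarrow> (nat \<Rightarrow> complex) \<Rightarrow> (nat \<Rightarrow> complex) \<Rightarrow> complex" where
  "Sfun n u p N v q M w r =
     (let ws = sites M w r;
          psiB = foldl (\<lambda>psi j. actOp M (opB (v j) (q j) ws) psi) (allUp M) [1..<N+1];
          psiC = foldl (\<lambda>psi j. actOp M (opC (u j) (p j) ws) psi) psiB [1..<n+1]
      in psiC (replicate (N - n) True @ replicate (M - (N - n)) False))"

definition Zfun :: "nat \<Rightarrow> (nat \<Rightarrow> complex) \<Rightarrow> (nat \<Rightarrow> complex) \<Rightarrow> (nat \<Rightarrow> complex) \<Rightarrow> (nat \<Rightarrow> complex) \<Rightarrow> complex" where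
  "Zfun N v q w r =
     (let ws = sites N w r;
          psiB = foldl (\<lambda>psi j. actOp N (opB (v j) (q j) ws) psi) (allUp N) [1..<N+1]
      in psiB (replicate N True))"

definition trig_poly :: "nat \<Rightarrow> (complex \<Rightarrow> complex) \<Rightarrow> bool" where
  "trig_poly d f \<longleftrightarrow> (\<exists>c :: nat \<Rightarrow> complex. \<forall>x. f x = (\<Sum>k=0..d. c k * exp (of_int (2 * int k - int d) * x)))"

end

theory Submission
  imports Defs
begin

text \<open>
Swap invariance is the Yang--Baxter relation: the Felderhof \<open>R\<close>-matrix acting on two neighbouring
sites \<open>j, j+1\<close> intertwines the monodromy matrix with the one whose sites \<open>j, j+1\<close> are exchanged.
Both the reference state \<open>|\<Uparrow>\<^sub>M\<rangle>\<close> and the bra, which is up on all sites beyond \<open>N - n\<close>,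
are eigenvectors of this \<open>R\<close>-matrix with the common eigenvalue \<open>[w\<^sub>j - w\<^sub>j\<^sub>+\<^sub>1 + r\<^sub>j + r\<^sub>j\<^sub>+\<^sub>1]\<close>.
This factor can be cancelled because, as a function of \<open>w\<^sub>j\<close>, it has isolated zeros while \<open>S\<^sub>n\<close>
is continuous. Adjacent transpositions then generate all exchanges.

The other statements come from the row of the monodromy matrix that the last operator \<open>C(u\<^sub>n)\<close>
contributes against the bra, which is down exactly on the first \<open>N - n\<close> sites. Every \<open>R\<close>-matrix
entry has degree at most one in \<open>u\<^sub>n\<close> and the auxiliary spin has to flip once, which gives degree
\<open>M - 1\<close>. On the down sites the auxiliary spin stays down, producing the factors
\<open>[-(u\<^sub>n - w\<^sub>j) + p\<^sub>n + r\<^sub>j]\<close>, whence the zeros. At \<open>u\<^sub>n + p\<^sub>n = w\<^sub>k + r\<^sub>k\<close>, \<open>k = N - n + 1\<close>, the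
weight \<open>b\<^sub>-\<close> of site \<open>k\<close> vanishes, so the auxiliary spin flips there and a single configuration
survives: the bra of \<open>S\<^sub>n\<^sub>-\<^sub>1\<close>. For \<open>n = 0\<close> the sites beyond \<open>N\<close> stay up under all
\<open>B\<close>-operators, each contributing a factor \<open>b\<^sub>-\<close>.
\<close>

section \<open>Monodromy matrix elements\<close>

lemma brk_eq_exp: "brk x = (exp x - inverse (exp x)) / 2"
  by (simp add: brk_def sinh_field_def exp_minus)

lemma sqbrk2_mult_self: "sqbrk2 p * sqbrk2 p = brk (2 * p)"
  unfolding sqbrk2_def power2_eq_square[symmetric] by simp

lemma UNIV_bool_pair: "(UNIV :: (bool \<times> bool) set) = {(False,False), (False,True), (True,False), (True,True)}"
  by auto

lemma mono_yang_baxter_two_sites: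
  fixes u p w1 r1 w2 r2 :: complex
  shows "(\<Sum>t\<in>UNIV. mono u p [(w1,r1),(w2,r2)] g h [x',y'] [fst t, snd t] * Rent w1 r1 w2 r2 (fst t) (snd t) y x)
       = (\<Sum>t\<in>UNIV. Rent w1 r1 w2 r2 x' y' (snd t) (fst t) * mono u p [(w2,r2),(w1,r1)] g h [fst t, snd t] [x,y])"
proof -
  have sq: "2 * (exp z * exp z) * (sqbrk2 z * sqbrk2 z) = (exp z * exp z) * (exp z * exp z) - 1" for z
  proof -
    have "sqbrk2 z * sqbrk2 z = (exp z * exp z - inverse (exp z * exp z)) / 2"
      by (simp only: sqbrk2_mult_self brk_eq_exp mult_2 exp_add)
    then show ?thesis by (simp add: field_simps)
  qed
  txt \<open>Entrywise, this is a polynomial identity in the exponentials of the parameters and the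
    square roots \<open>[2z]\<^sup>1\<^sup>/\<^sup>2\<close>, modulo the relations \<open>sq\<close>.\<close>
  show ?thesis
    using sq[of p] sq[of r1] sq[of r2]
    apply (simp add: UNIV_bool_pair)
    apply (cases g; cases h; cases x'; cases y'; cases x; cases y; simp)
    apply (simp_all add: brk_eq_exp exp_add exp_diff exp_minus field_simps)
    apply algebra+
    done
qed

lemma finite_bool_lists_length: "finite {xs :: bool list. length xs = M}"
  using finite_lists_length_eq[of "UNIV :: bool set" M] by simp

lemma mono_nonzero_length:
  "mono u p ws a b s' s \<noteq> 0 \<Longrightarrow> length s' = length ws \<and> length s = length ws"
proof (induction u p ws a b s' s rule: mono.induct)
  case (2 u p w r ws a b s' ss' s ss)
  then show ?case
    by (cases "mono u p ws False b ss' ss = 0"; cases "mono u p ws True b ss' ss = 0"; auto)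
qed auto

lemma mono_append:
  assumes "length s1' = length ws1" "length s1 = length ws1"
  shows "mono u p (ws1 @ ws2) a b (s1' @ s2') (s1 @ s2) =
    (\<Sum>g\<in>{False,True}. mono u p ws1 a g s1' s1 * mono u p ws2 g b s2' s2)"
  using assms
proof (induction ws1 arbitrary: a s1' s1)
  case Nil
  then show ?case by (cases a) auto
next
  case (Cons wr ws1)
  obtain w r where wr: "wr = (w,r)" by force
  obtain x' xs' where s1': "s1' = x' # xs'" using Cons.prems by (cases s1') auto
  obtain x xs where s1: "s1 = x # xs" using Cons.prems by (cases s1) auto
  have "length xs' = length ws1" "length xs = length ws1" using Cons.prems s1 s1' by auto
  then show ?case
    unfolding wr s1 s1' using Cons.IH by (simp add: algebra_simps)
qed

lemma mono_append_two_sites: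
  assumes "length A' = length ws1" "length A = length ws1" "length c' = 2" "length c = 2"
  shows "mono u p (ws1 @ [x,y] @ ws2) a b (A' @ c' @ B') (A @ c @ B) =
    (\<Sum>g\<in>{False,True}. mono u p ws1 a g A' A *
       (\<Sum>h\<in>{False,True}. mono u p [x,y] g h c' c * mono u p ws2 h b B' B))"
proof -
  have "mono u p ([x,y] @ ws2) g b (c' @ B') (c @ B) =
      (\<Sum>h\<in>{False,True}. mono u p [x,y] g h c' c * mono u p ws2 h b B' B)" for g
    by (rule mono_append) (use assms in simp_all)
  then show ?thesis by (simp only: mono_append[OF assms(1,2)])
qed

lemma sum_configs_two_sites:
  fixes G :: "bool list \<Rightarrow> complex"
  assumes "length A = i"
    and "\<And>t. length t = i + 2 + length B \<Longrightarrow> take i t \<noteq> A \<or> drop (i+2) t \<noteq> B \<Longrightarrow> G t = 0"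
  shows "(\<Sum>t\<in>{xs. length xs = i + 2 + length B}. G t) = (\<Sum>c\<in>UNIV. G (A @ [fst c, snd c] @ B))"
proof -
  let ?f = "\<lambda>c :: bool \<times> bool. A @ [fst c, snd c] @ B"
  have inj: "inj ?f" unfolding inj_def by auto
  have sub: "range ?f \<subseteq> {xs. length xs = i + 2 + length B}" using assms(1) by auto
  have "G t = 0" if t: "t \<in> {xs. length xs = i + 2 + length B} - range ?f" for t
  proof (rule ccontr)
    assume "G t \<noteq> 0"
    with assms(2) t have "take i t = A" "drop (i+2) t = B" by auto
    moreover have "t = take i t @ [t!i, t!(i+1)] @ drop (i+2) t"
      using t by (simp add: Cons_nth_drop_Suc id_take_nth_drop)
    ultimately have "t = ?f (t!i, t!(i+1))" by simp
    then show False using t by blast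
  qed
  then have "(\<Sum>t\<in>{xs. length xs = i + 2 + length B}. G t) = (\<Sum>t\<in>range ?f. G t)"
    by (intro sum.mono_neutral_right[OF finite_bool_lists_length sub]) blast
  also have "\<dots> = (\<Sum>c\<in>UNIV. G (?f c))" by (rule sum.reindex[OF inj, unfolded comp_def])
  finally show ?thesis .
qed

lemma sum_reorder_product:
  fixes a :: "'g \<Rightarrow> complex"
  shows "(\<Sum>c\<in>C. (\<Sum>g\<in>G. a g * (\<Sum>h\<in>H. m g h c * b h)) * r c)
       = (\<Sum>g\<in>G. \<Sum>h\<in>H. a g * b h * (\<Sum>c\<in>C. m g h c * r c))"
proof -
  have "(\<Sum>c\<in>C. (\<Sum>g\<in>G. a g * (\<Sum>h\<in>H. m g h c * b h)) * r c)
      = (\<Sum>c\<in>C. \<Sum>g\<in>G. \<Sum>h\<in>H. a g * b h * (m g h c * r c))"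
    by (simp add: sum_distrib_left sum_distrib_right mult_ac)
  also have "\<dots> = (\<Sum>g\<in>G. \<Sum>h\<in>H. \<Sum>c\<in>C. a g * b h * (m g h c * r c))"
    by (subst sum.swap) (simp add: sum.swap[of _ C])
  also have "\<dots> = (\<Sum>g\<in>G. \<Sum>h\<in>H. a g * b h * (\<Sum>c\<in>C. m g h c * r c))"
    by (simp add: sum_distrib_left)
  finally show ?thesis .
qed

lemma sum_reorder_product':
  fixes a :: "'g \<Rightarrow> complex"
  shows "(\<Sum>c\<in>C. r c * (\<Sum>g\<in>G. a g * (\<Sum>h\<in>H. m g h c * b h)))
       = (\<Sum>g\<in>G. \<Sum>h\<in>H. a g * b h * (\<Sum>c\<in>C. r c * m g h c))"
  using sum_reorder_product[where r = r and a = a and m = m and b = b] by (simp add: mult_ac)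

section \<open>The \<open>R\<close>-matrix on two neighbouring sites\<close>

text \<open>\<open>site_R i x y\<close> is \<open>P R(x, y)\<close>, with \<open>P\<close> the permutation, acting on the sites \<open>i, i + 1\<close>
(counted from \<open>0\<close>) of the chain.\<close>

definition site_R :: "nat \<Rightarrow> complex \<times> complex \<Rightarrow> complex \<times> complex \<Rightarrow> bool list \<Rightarrow> bool list \<Rightarrow> complex" where
  "site_R i x y s' s =
    (if length s' = length s \<and> take i s' = take i s \<and> drop (i+2) s' = drop (i+2) s
     then Rent (fst x) (snd x) (fst y) (snd y) (s'!i) (s'!(i+1)) (s!(i+1)) (s!i) else 0)"

lemma split_config_two_sites:
  assumes "length s = i + 2 + n"
  obtains A x0 y0 B where "s = A @ [x0,y0] @ B" "length A = i" "length B = n"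
proof -
  have "s = take i s @ [s!i, s!(i+1)] @ drop (i+2) s"
    using assms by (simp add: Cons_nth_drop_Suc id_take_nth_drop)
  then show ?thesis using that[of "take i s" "s!i" "s!(i+1)" "drop (i+2) s"] assms by simp
qed

lemma site_R_append:
  "length A = i \<Longrightarrow> length A' = i \<Longrightarrow> site_R i x y (A' @ a' # b' # B') (A @ a # b # B) =
   (if A' = A \<and> B' = B then Rent (fst x) (snd x) (fst y) (snd y) a' b' b a else 0)"
  unfolding site_R_def by (auto simp: nth_append)

lemma mono_site_R_intertwine:
  assumes "length ws1 = i" "length s = i + 2 + length ws2"
  shows "(\<Sum>t\<in>{xs. length xs = i + 2 + length ws2}. mono u p (ws1 @ [x,y] @ ws2) a b s' t * site_R i x y t s)
       = (\<Sum>t\<in>{xs. length xs = i + 2 + length ws2}. site_R i x y s' t * mono u p (ws1 @ [y,x] @ ws2) a b t s)"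
proof (cases "length s' = i + 2 + length ws2")
  case False
  then have "mono u p (ws1 @ [x,y] @ ws2) a b s' t = 0" "site_R i x y s' t = 0"
    if "length t = i + 2 + length ws2" for t
    using mono_nonzero_length[of u p "ws1 @ [x,y] @ ws2" a b s' t] that assms
    unfolding site_R_def by auto
  then show ?thesis by simp
next
  case True
  obtain A x0 y0 B where s: "s = A @ [x0,y0] @ B" "length A = i" "length B = length ws2"
    using split_config_two_sites[OF assms(2)] by blast
  obtain A' x0' y0' B' where s': "s' = A' @ [x0',y0'] @ B'" "length A' = i" "length B' = length ws2"
    using split_config_two_sites[OF True] by blast
  obtain w1 r1 where x: "x = (w1,r1)" by force
  obtain w2 r2 where y: "y = (w2,r2)" by force
  have mono_left: "mono u p (ws1 @ [x,y] @ ws2) a b s' (A @ [c1,c2] @ B) =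
      (\<Sum>g\<in>{False,True}. mono u p ws1 a g A' A *
         (\<Sum>h\<in>{False,True}. mono u p [x,y] g h [x0',y0'] [c1,c2] * mono u p ws2 h b B' B))" for c1 c2
    unfolding s'(1) by (rule mono_append_two_sites) (use s s' assms in auto)
  have mono_right: "mono u p (ws1 @ [y,x] @ ws2) a b (A' @ [c1,c2] @ B') s =
      (\<Sum>g\<in>{False,True}. mono u p ws1 a g A' A *
         (\<Sum>h\<in>{False,True}. mono u p [y,x] g h [c1,c2] [x0,y0] * mono u p ws2 h b B' B))" for c1 c2
    unfolding s(1) by (rule mono_append_two_sites) (use s s' assms in auto)
  have R_left: "site_R i x y (A @ [c1,c2] @ B) s = Rent w1 r1 w2 r2 c1 c2 y0 x0" for c1 c2
    unfolding s(1) using s(2) by (simp add: site_R_append x y)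
  have R_right: "site_R i x y s' (A' @ [c1,c2] @ B') = Rent w1 r1 w2 r2 x0' y0' c2 c1" for c1 c2
    unfolding s'(1) using s'(2) by (simp add: site_R_append x y)
  have "(\<Sum>t\<in>{xs. length xs = i + 2 + length ws2}. mono u p (ws1 @ [x,y] @ ws2) a b s' t * site_R i x y t s)
      = (\<Sum>c\<in>UNIV. mono u p (ws1 @ [x,y] @ ws2) a b s' (A @ [fst c, snd c] @ B) * site_R i x y (A @ [fst c, snd c] @ B) s)"
    unfolding s(3)[symmetric]
    by (rule sum_configs_two_sites[OF s(2)]) (use s in \<open>auto simp: site_R_def\<close>)
  also have "\<dots> = (\<Sum>c\<in>UNIV. site_R i x y s' (A' @ [fst c, snd c] @ B') * mono u p (ws1 @ [y,x] @ ws2) a b (A' @ [fst c, snd c] @ B') s)"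
    unfolding mono_left mono_right R_left R_right sum_reorder_product sum_reorder_product'
    by (simp only: x y mono_yang_baxter_two_sites)
  also have "\<dots> = (\<Sum>t\<in>{xs. length xs = i + 2 + length ws2}. site_R i x y s' t * mono u p (ws1 @ [y,x] @ ws2) a b t s)"
    unfolding s'(3)[symmetric]
    by (rule sum_configs_two_sites[OF s'(2), symmetric]) (use s' in \<open>auto simp: site_R_def\<close>)
  finally show ?thesis .
qed

section \<open>Exchange of neighbouring sites\<close>

abbreviation act_seq ::
  "nat \<Rightarrow> (nat \<Rightarrow> bool list \<Rightarrow> bool list \<Rightarrow> complex) \<Rightarrow> (bool list \<Rightarrow> complex) \<Rightarrow> nat list \<Rightarrow> bool list \<Rightarrow> complex" where
  "act_seq M Op psi0 js \<equiv> foldl (\<lambda>psi j. actOp M (Op j) psi) psi0 js"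

lemma actOp_intertwine:
  assumes "\<And>s' s. length s = M \<Longrightarrow>
    (\<Sum>t\<in>{xs. length xs = M}. Op s' t * R t s) = (\<Sum>t\<in>{xs. length xs = M}. R s' t * Op' t s)"
  shows "actOp M Op (actOp M R psi) = actOp M R (actOp M Op' psi)"
proof
  fix s'
  let ?C = "{xs :: bool list. length xs = M}"
  have "actOp M Op (actOp M R psi) s' = (\<Sum>t\<in>?C. \<Sum>s\<in>?C. Op s' t * R t s * psi s)"
    unfolding actOp_def by (simp add: sum_distrib_left mult_ac)
  also have "\<dots> = (\<Sum>s\<in>?C. (\<Sum>t\<in>?C. Op s' t * R t s) * psi s)"
    by (subst sum.swap) (simp add: sum_distrib_right)
  also have "\<dots> = (\<Sum>s\<in>?C. (\<Sum>t\<in>?C. R s' t * Op' t s) * psi s)"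
    using assms by simp
  also have "\<dots> = (\<Sum>t\<in>?C. \<Sum>s\<in>?C. R s' t * Op' t s * psi s)"
    by (subst sum.swap) (simp add: sum_distrib_right)
  also have "\<dots> = actOp M R (actOp M Op' psi) s'"
    unfolding actOp_def by (simp add: sum_distrib_left mult_ac)
  finally show "actOp M Op (actOp M R psi) s' = actOp M R (actOp M Op' psi) s'" .
qed

lemma act_seq_intertwine:
  assumes "\<And>j psi. actOp M (Op j) (actOp M R psi) = actOp M R (actOp M (Op' j) psi)"
  shows "act_seq M Op (actOp M R psi0) js = actOp M R (act_seq M Op' psi0 js)"
  using assms by (induction js arbitrary: psi0) auto

lemma act_seq_scale: "act_seq M Op (\<lambda>s. c * psi0 s) js = (\<lambda>s. c * act_seq M Op psi0 js s)"
proof -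
  have "actOp M Op' (\<lambda>s. c * psi s) = (\<lambda>s. c * actOp M Op' psi s)" for Op' psi
    unfolding actOp_def by (auto simp: sum_distrib_left mult_ac)
  then show ?thesis by (induction js arbitrary: psi0) auto
qed

definition Sfun_sites :: "nat \<Rightarrow> (nat \<Rightarrow> complex) \<Rightarrow> (nat \<Rightarrow> complex) \<Rightarrow> nat \<Rightarrow> (nat \<Rightarrow> complex) \<Rightarrow> (nat \<Rightarrow> complex)
     \<Rightarrow> nat \<Rightarrow> (complex \<times> complex) list \<Rightarrow> complex" where
  "Sfun_sites n u p N v q M ws =
     act_seq M (\<lambda>j. opC (u j) (p j) ws) (act_seq M (\<lambda>j. opB (v j) (q j) ws) (allUp M) [1..<N+1]) [1..<n+1]
       (replicate (N - n) True @ replicate (M - (N - n)) False)"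

lemma Sfun_eq_Sfun_sites: "Sfun n u p N v q M w r = Sfun_sites n u p N v q M (sites M w r)"
  unfolding Sfun_def Sfun_sites_def by (simp only: Let_def)

lemma replicate_split_two: "replicate (i + 2 + n) x = replicate i x @ [x,x] @ replicate n x"
  by (induction i) (auto simp: numeral_2_eq_2)

lemma site_R_allUp:
  assumes "M = i + 2 + n"
  shows "actOp M (site_R i x y) (allUp M) = (\<lambda>s. brk (fst x - fst y + snd x + snd y) * allUp M s)"
proof
  fix s'
  have up: "replicate M False = replicate i False @ [False,False] @ replicate n False"
    using assms by (simp only: replicate_split_two)
  have "actOp M (site_R i x y) (allUp M) s' = site_R i x y s' (replicate M False)"
    unfolding actOp_def allUp_def
    by (simp add: if_distrib[of "\<lambda>z. site_R i x y s' _ * z"] sum.delta' finite_bool_lists_length cong: if_cong)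
  also have "\<dots> = brk (fst x - fst y + snd x + snd y) * allUp M s'"
  proof (cases "length s' = M")
    case False
    then show ?thesis unfolding site_R_def allUp_def by auto
  next
    case True
    obtain A a b B where s': "s' = A @ [a,b] @ B" "length A = i" "length B = n"
      using split_config_two_sites[of s' i n] True assms by blast
    show ?thesis
      unfolding allUp_def up s'(1) using s'(2,3)
      by (cases a; cases b; simp add: site_R_append brk_def algebra_simps append_eq_append_conv)
  qed
  finally show "actOp M (site_R i x y) (allUp M) s' = brk (fst x - fst y + snd x + snd y) * allUp M s'" .
qed

lemma site_R_bra:
  assumes "M = i + 2 + n" "K \<le> i"
  shows "actOp M (site_R i x y) phi (replicate K True @ replicate (M - K) False) =
         brk (fst x - fst y + snd x + snd y) * phi (replicate K True @ replicate (M - K) False)"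
proof -
  define A where "A = replicate K True @ replicate (i - K) False"
  define B where "B = replicate n False"
  have bra: "replicate K True @ replicate (M - K) False = A @ [False,False] @ B"
  proof -
    have "M - K = (i - K) + 2 + n" using assms by simp
    then show ?thesis unfolding A_def B_def by (simp only: replicate_split_two append_assoc)
  qed
  have lA: "length A = i" using assms unfolding A_def by simp
  have "(\<Sum>t\<in>{xs. length xs = i + 2 + length B}. site_R i x y (A @ [False,False] @ B) t * phi t) =
      (\<Sum>c\<in>UNIV. site_R i x y (A @ [False,False] @ B) (A @ [fst c, snd c] @ B) * phi (A @ [fst c, snd c] @ B))"
  proof (rule sum_configs_two_sites[OF lA])
    fix t assume "take i t \<noteq> A \<or> drop (i + 2) t \<noteq> B"
    moreover have "take i (A @ [False,False] @ B) = A" "drop (i+2) (A @ [False,False] @ B) = B"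
      using lA by simp_all
    ultimately show "site_R i x y (A @ [False,False] @ B) t * phi t = 0"
      unfolding site_R_def by auto
  qed
  then have "actOp M (site_R i x y) phi (A @ [False,False] @ B) =
      (\<Sum>c\<in>UNIV. site_R i x y (A @ [False,False] @ B) (A @ [fst c, snd c] @ B) * phi (A @ [fst c, snd c] @ B))"
    unfolding actOp_def assms(1) B_def by simp
  also have "\<dots> = brk (fst x - fst y + snd x + snd y) * phi (A @ [False,False] @ B)"
    using lA by (simp add: UNIV_bool_pair site_R_append brk_def add.commute add.left_commute diff_add_eq)
  finally show ?thesis unfolding bra .
qed

lemma Sfun_sites_exchange_scaled:
  assumes "length ws1 = i" "M = i + 2 + length ws2" "N - n \<le> i"
  shows "brk (fst x - fst y + snd x + snd y) * Sfun_sites n u p N v q M (ws1 @ [x,y] @ ws2)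
       = brk (fst x - fst y + snd x + snd y) * Sfun_sites n u p N v q M (ws1 @ [y,x] @ ws2)"
proof -
  define ws where "ws = ws1 @ [x,y] @ ws2"
  define ws' where "ws' = ws1 @ [y,x] @ ws2"
  define c where "c = brk (fst x - fst y + snd x + snd y)"
  have row: "actOp M (mono u' p' ws a b) (actOp M (site_R i x y) psi) =
      actOp M (site_R i x y) (actOp M (mono u' p' ws' a b) psi)" for u' p' a b psi
    unfolding ws_def ws'_def
    by (rule actOp_intertwine, unfold assms(2), rule mono_site_R_intertwine[OF assms(1)]) simp
  have "c * Sfun_sites n u p N v q M ws =
      act_seq M (\<lambda>j. opC (u j) (p j) ws) (act_seq M (\<lambda>j. opB (v j) (q j) ws) (\<lambda>s. c * allUp M s) [1..<N+1]) [1..<n+1]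
       (replicate (N - n) True @ replicate (M - (N - n)) False)"
    unfolding Sfun_sites_def by (simp add: act_seq_scale)
  also have "\<dots> = actOp M (site_R i x y)
      (act_seq M (\<lambda>j. opC (u j) (p j) ws') (act_seq M (\<lambda>j. opB (v j) (q j) ws') (allUp M) [1..<N+1]) [1..<n+1])
       (replicate (N - n) True @ replicate (M - (N - n)) False)"
    unfolding c_def site_R_allUp[OF assms(2), symmetric] opB_def opC_def
    by (simp only: act_seq_intertwine[OF row])
  also have "\<dots> = c * Sfun_sites n u p N v q M ws'"
    unfolding c_def Sfun_sites_def by (rule site_R_bra[OF assms(2,3)])
  finally show ?thesis unfolding c_def ws_def ws'_def .
qed

lemma brk_add_real_nonzero:
  assumes "brk z = 0" "e \<noteq> (0::real)"
  shows "brk (z + complex_of_real e) \<noteq> 0"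
proof -
  have "cosh z \<noteq> 0" using cosh_square_eq[of z] assms(1) unfolding brk_def by auto
  moreover have "sinh (complex_of_real e) \<noteq> 0"
  proof
    assume "sinh (complex_of_real e) = 0"
    then have "complex_of_real (exp e) \<in> {1, -1}" by (simp add: sinh_zero_iff exp_of_real)
    then have "exp e = 1 \<or> exp e = -1" by (auto simp: complex_eq_iff)
    then show False using assms(2) by (metis exp_eq_one_iff exp_gt_zero neg_0_less_iff_less zero_less_one not_less_iff_gr_or_eq)
  qed
  moreover have "brk (z + complex_of_real e) = cosh z * sinh (complex_of_real e)"
    using assms(1) unfolding brk_def by (simp add: sinh_add)
  ultimately show ?thesis by simp
qed

text \<open>The zeros of \<open>brk\<close> are isolated: \<open>t\<^sub>0\<close> is the limit of the points \<open>t\<^sub>0 + 1/(n+1)\<close>, at which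
\<open>brk (t + c)\<close> does not vanish and hence \<open>g\<close> does.\<close>

lemma continuous_zero_if_brk_mult_zero:
  fixes g :: "complex \<Rightarrow> complex"
  assumes "\<And>t. brk (t + c) * g t = 0" "continuous_on UNIV g"
  shows "g t0 = 0"
proof (cases "brk (t0 + c) = 0")
  case False
  then show ?thesis using assms(1)[of t0] by simp
next
  case True
  let ?e = "\<lambda>n::nat. complex_of_real (1 / real (Suc n))"
  have "g (t0 + ?e n) = 0" for n
  proof -
    have "brk (t0 + c + ?e n) \<noteq> 0" by (rule brk_add_real_nonzero[OF True]) simp
    then show ?thesis using assms(1)[of "t0 + ?e n"] by (simp add: algebra_simps)
  qed
  moreover have "?e \<longlonglongrightarrow> 0"
    by (rule tendsto_of_real[OF LIMSEQ_Suc[OF lim_inverse_n'], unfolded of_real_0])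
  then have "(\<lambda>n. t0 + ?e n) \<longlonglongrightarrow> t0 + 0" by (rule tendsto_add[OF tendsto_const])
  then have "(\<lambda>n. t0 + ?e n) \<longlonglongrightarrow> t0" by (simp only: add_0_right)
  then have "(\<lambda>n. g (t0 + ?e n)) \<longlonglongrightarrow> g t0"
    using assms(2) by (intro isCont_tendsto_compose[where g = g]) (simp_all add: continuous_on_eq_continuous_at)
  ultimately show ?thesis by (simp add: LIMSEQ_const_iff)
qed

lemma continuous_on_Rent:
  "continuous_on UNIV f \<Longrightarrow> continuous_on UNIV (\<lambda>t. Rent u p (f t) r a b c d)"
  by (cases a; cases b; cases c; cases d) (auto simp: brk_def intro!: continuous_intros)

lemma continuous_on_mono:
  assumes "\<And>k. continuous_on UNIV (f k)"
  shows "continuous_on UNIV (\<lambda>t. mono u p (map (\<lambda>k. (f k t, r k)) ks) a b s' s)"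
proof (induction ks arbitrary: a s' s)
  case Nil
  then show ?case by (cases s'; cases s) auto
next
  case (Cons k ks)
  then show ?case
    using continuous_on_Rent[OF assms]
    by (cases s'; cases s) (auto intro!: continuous_intros)
qed

lemma continuous_on_act_seq:
  assumes "\<And>j s' s. continuous_on UNIV (\<lambda>t. Op j t s' s)" "\<And>s. continuous_on UNIV (\<lambda>t. psi t s)"
  shows "continuous_on UNIV (\<lambda>t. act_seq M (\<lambda>j. Op j t) (psi t) js s)"
  using assms(2)
proof (induction js arbitrary: psi s)
  case (Cons j js)
  have "continuous_on UNIV (\<lambda>t. actOp M (Op j t) (psi t) s)" for s
    unfolding actOp_def using assms(1) Cons.prems by (auto intro!: continuous_intros)
  then show ?case using Cons.IH by simp
qed simp

lemma continuous_on_Sfun_site: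
  "continuous_on UNIV (\<lambda>t. Sfun n u p N v q M (w(j0 := t)) r)"
proof -
  have "continuous_on UNIV (\<lambda>t. (w(j0 := t)) k)" for k
    by (cases "k = j0") (auto intro: continuous_intros)
  then have ops: "continuous_on UNIV (\<lambda>t. mono u' p' (sites M (w(j0 := t)) r) a b s' s)" for u' p' a b s' s
    unfolding sites_def using continuous_on_mono[of "\<lambda>k t. (w(j0 := t)) k"] by simp
  have B: "continuous_on UNIV (\<lambda>t. act_seq M (\<lambda>j. opB (v j) (q j) (sites M (w(j0 := t)) r)) (allUp M) [1..<N+1] s)" for s
    unfolding opB_def
    by (rule continuous_on_act_seq[where Op = "\<lambda>j t. mono (v j) (q j) (sites M (w(j0 := t)) r) False True"])
       (use ops in auto)
  have "continuous_on UNIV (\<lambda>t. act_seq M (\<lambda>j. opC (u j) (p j) (sites M (w(j0 := t)) r))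
      (act_seq M (\<lambda>j. opB (v j) (q j) (sites M (w(j0 := t)) r)) (allUp M) [1..<N+1]) [1..<n+1] s)" for s
    unfolding opC_def
    by (rule continuous_on_act_seq[where Op = "\<lambda>j t. mono (u j) (p j) (sites M (w(j0 := t)) r) True False"])
       (use ops B in auto)
  then show ?thesis unfolding Sfun_def Let_def by simp
qed

lemma length_sites [simp]: "length (sites M w r) = M"
  unfolding sites_def by simp

lemma sites_split_adjacent:
  assumes "1 \<le> j" "j + 1 \<le> M"
  shows "sites M w r = sites (j-1) w r @ [(w j, r j), (w (j+1), r (j+1))] @ map (\<lambda>k. (w k, r k)) [j+2..<M+1]"
proof -
  have e: "M+1 = j + (M+1-j)" using assms by simp
  have "[1..<M+1] = [1..<j] @ [j..<M+1]"
    using assms upt_add_eq_append[of 1 j "M+1-j"] by (simp only: e[symmetric])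
  also have "\<dots> = [1..<j] @ j # (j+1) # [j+2..<M+1]" using assms by (simp add: upt_conv_Cons)
  finally have "[1..<M+1] = [1..<j-1+1] @ j # (j+1) # [j+2..<M+1]" using assms by simp
  then show ?thesis unfolding sites_def by (simp only: map_append list.map append_Cons append_Nil)
qed

lemma sites_swap_adjacent:
  assumes "1 \<le> j" "j + 1 \<le> M"
  shows "sites M (w(j := w (j+1), j+1 := w j)) (r(j := r (j+1), j+1 := r j))
       = sites (j-1) w r @ [(w (j+1), r (j+1)), (w j, r j)] @ map (\<lambda>k. (w k, r k)) [j+2..<M+1]"
proof -
  let ?w = "w(j := w (j+1), j+1 := w j)" and ?r = "r(j := r (j+1), j+1 := r j)"
  have "sites (j-1) ?w ?r = sites (j-1) w r"
    unfolding sites_def by (rule map_cong) (use assms in auto)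
  moreover have "map (\<lambda>k. (?w k, ?r k)) [j+2..<M+1] = map (\<lambda>k. (w k, r k)) [j+2..<M+1]"
    by (rule map_cong) auto
  ultimately show ?thesis using sites_split_adjacent[OF assms, of ?w ?r] by simp
qed

lemma Sfun_swap_adjacent_scaled:
  assumes "N - n + 1 \<le> j" "j + 1 \<le> M"
  shows "brk (w j - w (j+1) + r j + r (j+1)) * Sfun n u p N v q M w r =
         brk (w j - w (j+1) + r j + r (j+1)) * Sfun n u p N v q M (w(j := w (j+1), j+1 := w j)) (r(j := r (j+1), j+1 := r j))"
proof -
  have j: "1 \<le> j" using assms by simp
  have len: "length (sites (j-1) w r) = j - 1" by simp
  have M: "M = (j - 1) + 2 + length (map (\<lambda>k. (w k, r k)) [j+2..<M+1])" using assms by (simp; arith)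
  show ?thesis
    unfolding Sfun_eq_Sfun_sites sites_swap_adjacent[OF j assms(2)] sites_split_adjacent[OF j assms(2), of w r]
    using Sfun_sites_exchange_scaled[OF len M, of N n "(w j, r j)" "(w (j+1), r (j+1))"] assms by simp
qed

lemma Sfun_swap_adjacent:
  assumes "N - n + 1 \<le> j" "j + 1 \<le> M"
  shows "Sfun n u p N v q M (w(j := w (j+1), j+1 := w j)) (r(j := r (j+1), j+1 := r j)) = Sfun n u p N v q M w r"
proof -
  define r' where "r' = r(j := r (j+1), j+1 := r j)"
  define g where "g t = Sfun n u p N v q M (w(j := t)) r - Sfun n u p N v q M (w(j := w (j+1), j+1 := t)) r'" for t
  have "(w(j := t))(j := (w(j := t)) (j+1), j+1 := (w(j := t)) j) = w(j := w (j+1), j+1 := t)" for t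
    by (auto simp: fun_eq_iff)
  then have "brk (t + (r j + r (j+1) - w (j+1))) * g t = 0" for t
    using Sfun_swap_adjacent_scaled[OF assms, of "w(j := t)" r u p v q] unfolding g_def r'_def
    by (simp add: algebra_simps)
  moreover have "continuous_on UNIV g"
    unfolding g_def by (intro continuous_on_diff continuous_on_Sfun_site)
  ultimately have "g (w j) = 0" by (rule continuous_zero_if_brk_mult_zero)
  then show ?thesis unfolding g_def r'_def fun_upd_triv right_minus_eq by (rule sym)
qed

lemma Sfun_swap_upward:
  assumes "N - n + 1 \<le> j" "j + 1 + m \<le> M"
  shows "Sfun n u p N v q M (w(j := w (j+1+m), j+1+m := w j)) (r(j := r (j+1+m), j+1+m := r j)) = Sfun n u p N v q M w r"
  using assms
proof (induction m arbitrary: w r)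
  case 0
  then show ?case unfolding add_0_right by (rule Sfun_swap_adjacent)
next
  case (Suc m)
  define k where "k = j + 1 + m"
  have jk: "j < k" "j + 1 + Suc m = k + 1" unfolding k_def by simp_all
  define w1 where "w1 = w(k := w (k+1), k+1 := w k)"
  define r1 where "r1 = r(k := r (k+1), k+1 := r k)"
  define w2 where "w2 = w1(j := w1 k, k := w1 j)"
  define r2 where "r2 = r1(j := r1 k, k := r1 j)"
  text \<open>The transposition \<open>(j, k+1)\<close> is the conjugate of \<open>(j, k)\<close> by \<open>(k, k+1)\<close>.\<close>
  have "w2(k := w2 (k+1), k+1 := w2 k) = w(j := w (k+1), k+1 := w j)"
    "r2(k := r2 (k+1), k+1 := r2 k) = r(j := r (k+1), k+1 := r j)"
    unfolding w2_def w1_def r2_def r1_def using jk by (auto simp: fun_eq_iff)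
  then have "Sfun n u p N v q M (w(j := w (k+1), k+1 := w j)) (r(j := r (k+1), k+1 := r j)) = Sfun n u p N v q M w2 r2"
    using Sfun_swap_adjacent[of N n k M u p v q w2 r2] Suc.prems jk by (simp add: k_def)
  also have "\<dots> = Sfun n u p N v q M w1 r1"
    unfolding w2_def r2_def k_def by (rule Suc.IH) (use Suc.prems in auto)
  also have "\<dots> = Sfun n u p N v q M w r"
    unfolding w1_def r1_def by (rule Sfun_swap_adjacent) (use Suc.prems jk in \<open>auto simp: k_def\<close>)
  finally show ?case unfolding jk(2) .
qed

lemma Sfun_swap_sites:
  assumes "N - n + 1 \<le> j" "j \<le> M" "N - n + 1 \<le> k" "k \<le> M"
  shows "Sfun n u p N v q M (w(j := w k, k := w j)) (r(j := r k, k := r j)) = Sfun n u p N v q M w r"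
proof -
  have upward: "Sfun n u p N v q M (w(a := w b, b := w a)) (r(a := r b, b := r a)) = Sfun n u p N v q M w r"
    if "N - n + 1 \<le> a" "a < b" "b \<le> M" for a b
    using Sfun_swap_upward[of N n a "b - a - 1" M] that by simp
  consider "j < k" | "j = k" | "k < j" by linarith
  then show ?thesis
  proof cases
    case 3
    have "w(j := w k, k := w j) = w(k := w j, j := w k)" "r(j := r k, k := r j) = r(k := r j, j := r k)"
      by (auto simp: fun_eq_iff)
    then show ?thesis using upward[of k j] 3 assms by simp
  qed (use upward assms in simp_all)
qed

section \<open>Trigonometric polynomials\<close>

lemma trig_poly_cong: "trig_poly d f \<Longrightarrow> d = d' \<Longrightarrow> (\<And>x. f x = g x) \<Longrightarrow> trig_poly d' g"
  unfolding trig_poly_def by metis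

lemma trig_poly_zero: "(\<And>x. f x = 0) \<Longrightarrow> trig_poly d f"
  unfolding trig_poly_def by (rule exI[of _ "\<lambda>k. 0"]) simp

lemma trig_poly_const: "trig_poly 0 (\<lambda>x. c)"
  unfolding trig_poly_def by (rule exI[of _ "\<lambda>k. c"]) simp

lemma trig_poly_add: "trig_poly d f \<Longrightarrow> trig_poly d g \<Longrightarrow> trig_poly d (\<lambda>x. f x + g x)"
  unfolding trig_poly_def
proof (elim exE)
  fix a b assume a: "\<forall>x. f x = (\<Sum>k = 0..d. a k * exp (of_int (2 * int k - int d) * x))"
    and b: "\<forall>x. g x = (\<Sum>k = 0..d. b k * exp (of_int (2 * int k - int d) * x))"
  show "\<exists>c. \<forall>x. f x + g x = (\<Sum>k = 0..d. c k * exp (of_int (2 * int k - int d) * x))"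
    by (rule exI[of _ "\<lambda>k. a k + b k"]) (simp add: a b sum.distrib distrib_right)
qed

lemma trig_poly_cmult: "trig_poly d f \<Longrightarrow> trig_poly d (\<lambda>x. c * f x)"
  unfolding trig_poly_def
proof (elim exE)
  fix a assume a: "\<forall>x. f x = (\<Sum>k = 0..d. a k * exp (of_int (2 * int k - int d) * x))"
  show "\<exists>b. \<forall>x. c * f x = (\<Sum>k = 0..d. b k * exp (of_int (2 * int k - int d) * x))"
    by (rule exI[of _ "\<lambda>k. c * a k"]) (simp add: a sum_distrib_left mult.assoc)
qed

lemma trig_poly_sum:
  "finite A \<Longrightarrow> (\<And>a. a \<in> A \<Longrightarrow> trig_poly d (f a)) \<Longrightarrow> trig_poly d (\<lambda>x. \<Sum>a\<in>A. f a x)"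
  by (induction A rule: finite_induct) (simp_all add: trig_poly_zero trig_poly_add)

lemma trig_poly_exp_minus_mult: "trig_poly d f \<Longrightarrow> trig_poly (d+1) (\<lambda>x. exp (-x) * f x)"
  unfolding trig_poly_def
proof (elim exE)
  fix a assume a: "\<forall>x. f x = (\<Sum>k = 0..d. a k * exp (of_int (2 * int k - int d) * x))"
  show "\<exists>c. \<forall>x. exp (-x) * f x = (\<Sum>k = 0..d+1. c k * exp (of_int (2 * int k - int (d+1)) * x))"
    apply (rule exI[of _ "\<lambda>k. if k \<le> d then a k else 0"])
    apply (simp add: a sum_distrib_left)
    apply (intro allI sum.cong[OF refl])
    apply (subst mult.left_commute, subst exp_add[symmetric])
    apply (simp add: algebra_simps)
    done
qed

lemma trig_poly_exp_mult: "trig_poly d f \<Longrightarrow> trig_poly (d+1) (\<lambda>x. exp x * f x)"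
  unfolding trig_poly_def
proof (elim exE)
  fix a assume a: "\<forall>x. f x = (\<Sum>k = 0..d. a k * exp (of_int (2 * int k - int d) * x))"
  show "\<exists>c. \<forall>x. exp x * f x = (\<Sum>k = 0..d+1. c k * exp (of_int (2 * int k - int (d+1)) * x))"
    apply (rule exI[of _ "\<lambda>k. if k = 0 then 0 else a (k - 1)"])
    apply (simp only: Suc_eq_plus1[symmetric] sum.atLeast0_atMost_Suc_shift)
    apply (simp add: a sum_distrib_left)
    apply (intro allI sum.cong[OF refl])
    apply (subst mult.left_commute, subst exp_add[symmetric])
    apply (simp add: algebra_simps)
    done
qed

text \<open>The degree can only be raised in steps of two: the exponents of a trigonometric polynomial
of degree \<open>d\<close> have the parity of \<open>d\<close>.\<close>

lemma trig_poly_degree_add2: "trig_poly d f \<Longrightarrow> trig_poly (d+2) f"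
proof -
  assume "trig_poly d f"
  then have "trig_poly (d+1+1) (\<lambda>x. exp x * (exp (-x) * f x))"
    by (intro trig_poly_exp_mult trig_poly_exp_minus_mult)
  then show ?thesis by (rule trig_poly_cong) (auto simp: exp_minus)
qed

lemma trig_poly_brk_add: "trig_poly 1 (\<lambda>x. brk (x + c))"
proof -
  have "trig_poly (0+1) (\<lambda>x. exp x * (exp c / 2) + exp (-x) * (- exp (-c) / 2))"
    by (intro trig_poly_add trig_poly_exp_mult trig_poly_exp_minus_mult trig_poly_const)
  then show ?thesis
    by (rule trig_poly_cong) (auto simp: brk_def sinh_field_def exp_add exp_diff exp_minus field_simps)
qed

lemma trig_poly_brk_minus_add: "trig_poly 1 (\<lambda>x. brk (- x + c))"
proof -
  have "trig_poly (0+1) (\<lambda>x. exp (-x) * (exp c / 2) + exp x * (- exp (-c) / 2))"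
    by (intro trig_poly_add trig_poly_exp_mult trig_poly_exp_minus_mult trig_poly_const)
  then show ?thesis
    by (rule trig_poly_cong) (auto simp: brk_def sinh_field_def exp_add exp_diff exp_minus field_simps)
qed

lemma trig_poly_mult_degree1:
  assumes h: "trig_poly 1 h" and f: "trig_poly d f"
  shows "trig_poly (d+1) (\<lambda>x. h x * f x)"
proof -
  obtain c where "\<forall>x. h x = (\<Sum>k = 0..1. c k * exp (of_int (2 * int k - int 1) * x))"
    using h unfolding trig_poly_def by blast
  then have hx: "h x = c 0 * exp (-x) + c 1 * exp x" for x by simp
  have "trig_poly (d+1) (\<lambda>x. c 0 * (exp (-x) * f x) + c 1 * (exp x * f x))"
    by (intro trig_poly_add trig_poly_cmult trig_poly_exp_minus_mult trig_poly_exp_mult f)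
  then show ?thesis by (rule trig_poly_cong) (simp_all add: hx algebra_simps)
qed

lemma trig_poly_mult_degree0:
  assumes h: "trig_poly 0 h" and f: "trig_poly d f"
  shows "trig_poly d (\<lambda>x. h x * f x)"
proof -
  obtain c where "\<forall>x. h x = (\<Sum>k = 0..0. c k * exp (of_int (2 * int k - int 0) * x))"
    using h unfolding trig_poly_def by blast
  then have "h x = c 0" for x by simp
  then show ?thesis by (intro trig_poly_cong[OF trig_poly_cmult[OF f, of "c 0"]]) simp_all
qed

lemma trig_poly_Rent_diagonal: "trig_poly 1 (\<lambda>x. Rent x p w r a b a d)"
proof (cases a; cases b; cases d)
  assume "\<not> a" "\<not> b" "\<not> d"
  then show ?thesis by simp (rule trig_poly_cong[OF trig_poly_brk_add[of "p + r - w"]], auto simp: algebra_simps)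
next
  assume "\<not> a" "b" "d"
  then show ?thesis by simp (rule trig_poly_cong[OF trig_poly_brk_add[of "r - p - w"]], auto simp: algebra_simps)
next
  assume "a" "\<not> b" "\<not> d"
  then show ?thesis by simp (rule trig_poly_cong[OF trig_poly_brk_add[of "p - r - w"]], auto simp: algebra_simps)
next
  assume "a" "b" "d"
  then show ?thesis by simp (rule trig_poly_cong[OF trig_poly_brk_minus_add[of "w + p + r"]], auto simp: algebra_simps)
qed (auto intro: trig_poly_zero)

lemma trig_poly_Rent_offdiagonal: "a \<noteq> c \<Longrightarrow> trig_poly 0 (\<lambda>x. Rent x p w r a b c d)"
  using trig_poly_const[of "Rent 0 p w r a b c d"] by (cases a; cases b; cases c; cases d) simp_all

text \<open>The diagonal entries of the monodromy matrix have degree \<open>M\<close>, the off-diagonal ones degree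
\<open>M - 1\<close>; the empty chain has to be treated apart since degree \<open>0\<close> does not lift to degree \<open>1\<close>.\<close>

lemma trig_poly_mono:
  "(a = b \<longrightarrow> trig_poly (length ws) (\<lambda>x. mono x p ws a b s' s)) \<and>
   (a \<noteq> b \<longrightarrow> trig_poly (length ws - 1) (\<lambda>x. mono x p ws a b s' s) \<and> (ws = [] \<longrightarrow> (\<forall>x. mono x p ws a b s' s = 0)))"
proof (induction ws arbitrary: a s' s)
  case Nil
  show ?case by (cases s'; cases s) (auto intro: trig_poly_const trig_poly_zero)
next
  case (Cons wr ws)
  obtain w r where wr: "wr = (w, r)" by force
  show ?case
  proof (cases s'; cases s)
    fix x' xs' x xs assume s': "s' = x' # xs'" and s: "s = x # xs"
    have split: "mono y p (wr # ws) a b s' s = Rent y p w r a x' a x * mono y p ws a b xs' xs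
        + Rent y p w r a x' (\<not> a) x * mono y p ws (\<not> a) b xs' xs" for y
      unfolding wr s' s by (cases a) (auto simp: add.commute)
    have T1: "trig_poly 1 (\<lambda>y. Rent y p w r a x' a x)" by (rule trig_poly_Rent_diagonal)
    have T0: "trig_poly 0 (\<lambda>y. Rent y p w r a x' (\<not> a) x)" by (rule trig_poly_Rent_offdiagonal) simp
    show ?thesis
    proof (cases "a = b")
      case True
      have A: "trig_poly (length ws + 1) (\<lambda>y. Rent y p w r a x' a x * mono y p ws a b xs' xs)"
        using Cons.IH[of a xs' xs] True by (intro trig_poly_mult_degree1[OF T1]) auto
      have B: "trig_poly (length ws + 1) (\<lambda>y. Rent y p w r a x' (\<not> a) x * mono y p ws (\<not> a) b xs' xs)"
      proof (cases "ws = []")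
        case True
        then show ?thesis using Cons.IH[of "\<not> a" xs' xs] \<open>a = b\<close> by (auto intro: trig_poly_zero)
      next
        case False
        have "trig_poly (length ws - 1 + 2) (\<lambda>y. Rent y p w r a x' (\<not> a) x * mono y p ws (\<not> a) b xs' xs)"
          using Cons.IH[of "\<not> a" xs' xs] \<open>a = b\<close>
          by (intro trig_poly_degree_add2 trig_poly_mult_degree0[OF T0]) auto
        then show ?thesis by (rule trig_poly_cong) (use False in auto)
      qed
      have "trig_poly (length (wr # ws)) (\<lambda>y. mono y p (wr # ws) a b s' s)"
        by (rule trig_poly_cong[OF trig_poly_add[OF A B]]) (simp_all only: split length_Cons)
      then show ?thesis using True by simp
    next
      case False
      have A: "trig_poly (length ws) (\<lambda>y. Rent y p w r a x' a x * mono y p ws a b xs' xs)"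
      proof (cases "ws = []")
        case True
        then show ?thesis using Cons.IH[of a xs' xs] \<open>a \<noteq> b\<close> by (auto intro: trig_poly_zero)
      next
        case False
        have "trig_poly (length ws - 1 + 1) (\<lambda>y. Rent y p w r a x' a x * mono y p ws a b xs' xs)"
          using Cons.IH[of a xs' xs] \<open>a \<noteq> b\<close> by (intro trig_poly_mult_degree1[OF T1]) auto
        then show ?thesis by (rule trig_poly_cong) (use False in auto)
      qed
      have B: "trig_poly (length ws) (\<lambda>y. Rent y p w r a x' (\<not> a) x * mono y p ws (\<not> a) b xs' xs)"
        using Cons.IH[of "\<not> a" xs' xs] False
        by (intro trig_poly_mult_degree0[OF T0]) (cases a; cases b; auto)
      have "trig_poly (length (wr # ws) - 1) (\<lambda>y. mono y p (wr # ws) a b s' s)"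
        by (rule trig_poly_cong[OF trig_poly_add[OF A B]]) (simp_all only: split length_Cons diff_Suc_1)
      then show ?thesis using False by simp
    qed
  qed (auto intro: trig_poly_zero)
qed

section \<open>The last \<open>C\<close>-operator\<close>

lemma Sfun_last_C:
  assumes "1 \<le> n"
  shows "Sfun n (u(n := x)) p N v q M w r =
    actOp M (opC x (p n) (sites M w r))
      (act_seq M (\<lambda>j. opC (u j) (p j) (sites M w r))
        (act_seq M (\<lambda>j. opB (v j) (q j) (sites M w r)) (allUp M) [1..<N+1]) [1..<n])
      (replicate (N - n) True @ replicate (M - (N - n)) False)"
proof -
  have "[1..<n+1] = [1..<n] @ [n]" using assms by simp
  moreover have "act_seq M (\<lambda>j. opC ((u(n := x)) j) (p j) (sites M w r)) psi0 [1..<n]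
      = act_seq M (\<lambda>j. opC (u j) (p j) (sites M w r)) psi0 [1..<n]" for psi0
    by (rule foldl_cong) auto
  ultimately show ?thesis unfolding Sfun_def Let_def by simp
qed

lemma Sfun_pred:
  assumes "1 \<le> n"
  shows "Sfun (n - 1) u p N v q M w r =
      act_seq M (\<lambda>j. opC (u j) (p j) (sites M w r))
        (act_seq M (\<lambda>j. opB (v j) (q j) (sites M w r)) (allUp M) [1..<N+1]) [1..<n]
      (replicate (N - (n - 1)) True @ replicate (M - (N - (n - 1))) False)"
  using assms unfolding Sfun_def Let_def by simp

lemma Sfun_trig_poly:
  assumes "1 \<le> n"
  shows "trig_poly (M - 1) (\<lambda>x. Sfun n (u(n := x)) p N v q M w r)"
proof -
  define Phi where "Phi = act_seq M (\<lambda>j. opC (u j) (p j) (sites M w r))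
        (act_seq M (\<lambda>j. opB (v j) (q j) (sites M w r)) (allUp M) [1..<N+1]) [1..<n]"
  define bra where "bra = replicate (N - n) True @ replicate (M - (N - n)) False"
  have "trig_poly (M - 1) (\<lambda>x. \<Sum>s\<in>{xs. length xs = M}. Phi s * mono x (p n) (sites M w r) True False bra s)"
    using trig_poly_mono[where a = True and b = False and p = "p n" and ws = "sites M w r"]
    by (intro trig_poly_sum trig_poly_cmult finite_bool_lists_length) simp
  then show ?thesis
    by (rule trig_poly_cong) (simp_all add: Sfun_last_C[OF assms] actOp_def opC_def Phi_def bra_def mult.commute)
qed

lemma mono_down_row_zero:
  "j < k \<Longrightarrow> k \<le> length ws \<Longrightarrow> x = p + fst (ws!j) + snd (ws!j) \<Longrightarrow>
   mono x p ws True b (replicate k True @ rest) s = 0"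
proof (induction ws arbitrary: j k s)
  case (Cons wr ws)
  obtain w r where wr: "wr = (w,r)" by force
  obtain k' where k: "k = Suc k'" using Cons.prems by (cases k) auto
  show ?case
  proof (cases s)
    case (Cons x0 xs)
    show ?thesis
    proof (cases j)
      case 0
      then have "x = p + w + r" using Cons.prems wr by simp
      then show ?thesis unfolding k wr Cons by (cases x0) (simp_all add: brk_def)
    next
      case (Suc j')
      have "mono x p ws True b (replicate k' True @ rest) xs = 0"
        using Cons.prems Suc k by (intro Cons.IH[of j']) auto
      then show ?thesis unfolding k wr Cons by (cases x0) simp_all
    qed
  qed (simp add: k wr)
qed simp

lemma sites_nth: "j < M \<Longrightarrow> sites M w r ! j = (w (j+1), r (j+1))"
  unfolding sites_def by (simp del: upt_Suc add: nth_upt)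

lemma Sfun_vanishes:
  assumes "1 \<le> n" "1 \<le> j" "j \<le> N - n" "N \<le> M"
  shows "Sfun n (u(n := p n + w j + r j)) p N v q M w r = 0"
proof -
  have "mono (p n + w j + r j) (p n) (sites M w r) True False
      (replicate (N - n) True @ replicate (M - (N - n)) False) s = 0" for s
    using assms by (intro mono_down_row_zero[of "j - 1"]) (auto simp: sites_nth)
  then show ?thesis unfolding Sfun_last_C[OF assms(1)] actOp_def opC_def by simp
qed

lemma prod_list_take_sites:
  "k \<le> M \<Longrightarrow> prod_list (map g (take k (sites M w r))) = (\<Prod>j\<in>{1..<k+1}. g (w j, r j))"
  unfolding sites_def
  by (simp del: upt_Suc add: take_map take_upt prod.distinct_set_conv_list[symmetric] comp_def)

lemma prod_list_drop_sites:
  "prod_list (map g (drop k (sites M w r))) = (\<Prod>j\<in>{k+1..<M+1}. g (w j, r j))"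
  unfolding sites_def
  by (simp del: upt_Suc add: drop_map drop_upt prod.distinct_set_conv_list[symmetric] comp_def)

lemma mono_down_prefix:
  "k \<le> length ws \<Longrightarrow> mono x p ws True b (replicate k True @ rest) s =
    (if take k s = replicate k True
     then prod_list (map (\<lambda>wr. brk (-(x - fst wr) + p + snd wr)) (take k ws)) * mono x p (drop k ws) True b rest (drop k s)
     else 0)"
proof (induction k arbitrary: ws s)
  case (Suc k)
  obtain w r ws' where ws: "ws = (w,r) # ws'" using Suc.prems by (cases ws) auto
  show ?case
  proof (cases s)
    case (Cons x0 xs)
    have "mono x p ws' True b (replicate k True @ rest) xs =
      (if take k xs = replicate k True
       then prod_list (map (\<lambda>wr. brk (-(x - fst wr) + p + snd wr)) (take k ws')) * mono x p (drop k ws') True b rest (drop k xs)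
       else 0)"
      using Suc.prems ws by (intro Suc.IH) simp
    then show ?thesis unfolding ws Cons by (cases x0) simp_all
  qed (simp add: ws)
qed simp

lemma mono_up_suffix:
  "length ws = m \<Longrightarrow> mono x p ws False False (replicate m False) s =
    (if s = replicate m False then prod_list (map (\<lambda>wr. brk (x - fst wr + p + snd wr)) ws) else 0)"
proof (induction ws arbitrary: m s)
  case Nil
  then show ?case by (cases s) auto
next
  case (Cons wr ws)
  obtain w r where wr: "wr = (w,r)" by force
  obtain m' where m: "m = Suc m'" using Cons.prems by (cases m) auto
  show ?case
  proof (cases s)
    case (Cons x0 xs)
    have "mono x p ws False False (replicate m' False) xs =
        (if xs = replicate m' False then prod_list (map (\<lambda>wr. brk (x - fst wr + p + snd wr)) ws) else 0)"
      using Cons.prems m by (intro Cons.IH) simp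
    then show ?thesis unfolding wr m Cons by (cases x0) (simp_all add: algebra_simps)
  qed (simp add: wr m)
qed

lemma mono_flip_site:
  assumes "x + p = w + r"
  shows "mono x p ((w,r) # ws) True False (False # rest) (x0 # xs) =
     (if x0 then sqbrk2 p * sqbrk2 r * mono x p ws False False rest xs else 0)"
proof -
  have "brk (x - w - (r - p)) = 0" using assms by (simp add: brk_def algebra_simps)
  then show ?thesis by (cases x0) simp_all
qed

lemma mono_row_at_flip:
  assumes "length ws = k + 1 + m" "x + p = fst (ws!k) + snd (ws!k)" "length s = k + 1 + m"
  shows "mono x p ws True False (replicate k True @ False # replicate m False) s =
    (if s = replicate (k+1) True @ replicate m False then
      prod_list (map (\<lambda>wr. brk (-(x - fst wr) + p + snd wr)) (take k ws)) * (sqbrk2 p * sqbrk2 (snd (ws!k)))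
      * prod_list (map (\<lambda>wr. brk (x - fst wr + p + snd wr)) (drop (k+1) ws)) else 0)"
proof -
  have dw: "drop k ws = (fst (ws!k), snd (ws!k)) # drop (k+1) ws"
    using assms(1) by (simp add: Cons_nth_drop_Suc)
  have ds: "drop k s = s!k # drop (k+1) s" using assms(3) by (simp add: Cons_nth_drop_Suc)
  have s: "s = take k s @ s!k # drop (k+1) s" using assms(3) by (simp add: id_take_nth_drop)
  have rep: "replicate (k+1) True @ replicate m False = replicate k True @ True # replicate m False"
    by (induction k) auto
  have cond: "(take k s = replicate k True \<and> s!k \<and> drop (k+1) s = replicate m False) \<longleftrightarrow>
      s = replicate (k+1) True @ replicate m False"
  proof
    assume "take k s = replicate k True \<and> s!k \<and> drop (k+1) s = replicate m False"
    then show "s = replicate (k+1) True @ replicate m False" unfolding rep by (subst s) simp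
  next
    assume "s = replicate (k+1) True @ replicate m False"
    then show "take k s = replicate k True \<and> s!k \<and> drop (k+1) s = replicate m False"
      unfolding rep by (simp add: nth_append)
  qed
  have lm: "length (drop (k+1) ws) = m" using assms(1) by simp
  have "mono x p ws True False (replicate k True @ False # replicate m False) s =
    (if take k s = replicate k True
     then prod_list (map (\<lambda>wr. brk (-(x - fst wr) + p + snd wr)) (take k ws))
       * mono x p (drop k ws) True False (False # replicate m False) (drop k s)
     else 0)"
    by (rule mono_down_prefix) (use assms(1) in simp)
  then show ?thesis
    unfolding dw ds mono_flip_site[OF assms(2)] mono_up_suffix[OF lm] cond[symmetric] by auto
qed

lemma sum_single_support:
  assumes "finite A" "c \<in> A" "\<And>t. t \<in> A \<Longrightarrow> f t = (if t = c then F else 0)"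
  shows "(\<Sum>t\<in>A. f t * g t) = (F * g c :: complex)"
proof -
  have "(\<Sum>t\<in>A. f t * g t) = (\<Sum>t\<in>A. if t = c then F * g t else 0)"
    by (rule sum.cong) (auto simp: assms(3))
  also have "\<dots> = F * g c" using assms by (simp add: sum.delta')
  finally show ?thesis .
qed

lemma Sfun_recursion:
  assumes "1 \<le> n" "n \<le> N" "N \<le> M" "x + p n = w (N - n + 1) + r (N - n + 1)"
  shows "Sfun n (u(n := x)) p N v q M w r =
                sqbrk2 (p n) * sqbrk2 (r (N - n + 1))
                * (\<Prod>j\<in>{1..<N - n + 1}. brk (w j - w (N - n + 1) + r j - r (N - n + 1) + 2 * p n))
                * (\<Prod>j\<in>{N - n + 1<..M}. brk (w (N - n + 1) - w j + r j + r (N - n + 1)))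
                * Sfun (n - 1) u p N v q M w r"
proof -
  define k where "k = N - n"
  define m where "m = M - k - 1"
  define ws where "ws = sites M w r"
  have Mk: "M = k + 1 + m" using assms unfolding k_def m_def by simp
  have x: "x = w (k+1) + r (k+1) - p n" using assms(4) unfolding k_def by (simp add: algebra_simps)
  have wsk: "ws ! k = (w (k+1), r (k+1))" unfolding ws_def using Mk by (simp add: sites_nth)
  have lws: "length ws = k + 1 + m" unfolding ws_def using Mk by simp
  have flip: "x + p n = fst (ws!k) + snd (ws!k)" using assms(4) wsk unfolding k_def by simp
  have bra: "replicate (N - n) True @ replicate (M - (N - n)) False = replicate k True @ False # replicate m False"
    using Mk unfolding k_def by simp
  have bra': "replicate (N - (n - 1)) True @ replicate (M - (N - (n - 1))) False = replicate (k+1) True @ replicate m False"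
    using assms Mk unfolding k_def by (simp add: Suc_diff_le)
  define P1 where "P1 = prod_list (map (\<lambda>wr. brk (-(x - fst wr) + p n + snd wr)) (take k ws))"
  define P2 where "P2 = prod_list (map (\<lambda>wr. brk (x - fst wr + p n + snd wr)) (drop (k+1) ws))"
  have "Sfun n (u(n := x)) p N v q M w r = P1 * (sqbrk2 (p n) * sqbrk2 (r (k+1))) * P2 * Sfun (n - 1) u p N v q M w r"
    unfolding Sfun_last_C[OF assms(1)] Sfun_pred[OF assms(1)] actOp_def opC_def bra bra' ws_def[symmetric]
  proof (rule sum_single_support[OF finite_bool_lists_length])
    fix t :: "bool list" assume "t \<in> {xs. length xs = M}"
    then show "mono x (p n) ws True False (replicate k True @ False # replicate m False) t =
      (if t = replicate (k+1) True @ replicate m False then P1 * (sqbrk2 (p n) * sqbrk2 (r (k+1))) * P2 else 0)"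
      unfolding P1_def P2_def using mono_row_at_flip[OF lws flip] Mk wsk by simp
  qed (use Mk in simp)
  moreover have "P1 = (\<Prod>j\<in>{1..<k+1}. brk (w j - w (k+1) + r j - r (k+1) + 2 * p n))"
    unfolding P1_def ws_def using Mk by (simp add: prod_list_take_sites x algebra_simps mult_2)
  moreover have "P2 = (\<Prod>j\<in>{k+1<..M}. brk (w (k+1) - w j + r j + r (k+1)))"
  proof -
    have "{k+1+1..<M+1} = {k+1<..M}" by auto
    then show ?thesis unfolding P2_def ws_def prod_list_drop_sites by (simp add: x algebra_simps)
  qed
  ultimately show ?thesis unfolding k_def by (simp only: mult_ac)
qed

section \<open>No \<open>C\<close>-operators\<close>

lemma mono_B_up_chain: "length ws = m \<Longrightarrow> mono x p ws False True (replicate m False) s = 0"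
proof (induction ws arbitrary: m s)
  case Nil
  then show ?case by (cases s) auto
next
  case (Cons wr ws)
  obtain w r where wr: "wr = (w,r)" by force
  obtain m' where m: "m = Suc m'" using Cons.prems by (cases m) auto
  show ?case
  proof (cases s)
    case (Cons x0 xs)
    have "mono x p ws False True (replicate m' False) xs = 0" using Cons.prems m by (intro Cons.IH) simp
    then show ?thesis unfolding wr m Cons by (cases x0) simp_all
  qed (simp add: wr m)
qed

lemma mono_D_up_chain: "length ws = m \<Longrightarrow> mono x p ws True True (replicate m False) s =
   (if s = replicate m False then prod_list (map (\<lambda>wr. brk (x - fst wr - (snd wr - p))) ws) else 0)"
proof (induction ws arbitrary: m s)
  case Nil
  then show ?case by (cases s) auto
next
  case (Cons wr ws)
  obtain w r where wr: "wr = (w,r)" by force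
  obtain m' where m: "m = Suc m'" using Cons.prems by (cases m) auto
  show ?case
  proof (cases s)
    case (Cons x0 xs)
    have "mono x p ws True True (replicate m' False) xs =
        (if xs = replicate m' False then prod_list (map (\<lambda>wr. brk (x - fst wr - (snd wr - p))) ws) else 0)"
      using Cons.prems m by (intro Cons.IH) simp
    moreover have "mono x p ws False True (replicate m' False) xs = 0"
      using Cons.prems m by (intro mono_B_up_chain) simp
    ultimately show ?thesis unfolding wr m Cons by (cases x0) simp_all
  qed (simp add: wr m)
qed

lemma sum_configs_up_tail:
  fixes G :: "bool list \<Rightarrow> complex"
  assumes "\<And>s. length s = N + m \<Longrightarrow> drop N s \<noteq> replicate m False \<Longrightarrow> G s = 0"
  shows "(\<Sum>s\<in>{xs. length xs = N + m}. G s) = (\<Sum>s\<in>{xs. length xs = N}. G (s @ replicate m False))"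
proof -
  let ?f = "\<lambda>s :: bool list. s @ replicate m False"
  have sub: "?f ` {xs. length xs = N} \<subseteq> {xs. length xs = N + m}" by auto
  have "G t = 0" if t: "t \<in> {xs. length xs = N + m} - ?f ` {xs. length xs = N}" for t
  proof (rule ccontr)
    assume "G t \<noteq> 0"
    with assms t have "drop N t = replicate m False" by auto
    then have "t = ?f (take N t)" by (metis append_take_drop_id)
    moreover have "length (take N t) = N" using t by simp
    ultimately show False using t by blast
  qed
  then have "(\<Sum>s\<in>{xs. length xs = N + m}. G s) = (\<Sum>t\<in>?f ` {xs. length xs = N}. G t)"
    by (intro sum.mono_neutral_right[OF finite_bool_lists_length sub]) blast
  also have "\<dots> = (\<Sum>s\<in>{xs. length xs = N}. G (?f s))"
    by (rule sum.reindex[unfolded comp_def]) (simp add: inj_on_def)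
  finally show ?thesis .
qed

lemma mono_B_append_up_chain:
  assumes "length ws = N" "length tws = m" "length s1 = N" "length sA = N"
  shows "mono x p (ws @ tws) False True (s1 @ replicate m False) (sA @ sB) =
    (if sB = replicate m False then prod_list (map (\<lambda>wr. brk (x - fst wr - (snd wr - p))) tws) * mono x p ws False True s1 sA else 0)"
  using assms by (simp add: mono_append mono_B_up_chain mono_D_up_chain)

lemma act_seq_B_append_up_chain:
  assumes "length ws = N" "length tws = m" "length s1 = N"
  shows "act_seq (N+m) (\<lambda>j. opB (v j) (q j) (ws @ tws)) (allUp (N+m)) [1..<t+1] (s1 @ replicate m False) =
    (\<Prod>j\<in>{1..t}. prod_list (map (\<lambda>wr. brk (v j - fst wr - (snd wr - q j))) tws)) *
    act_seq N (\<lambda>j. opB (v j) (q j) ws) (allUp N) [1..<t+1] s1"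
  using assms(3)
proof (induction t arbitrary: s1)
  case 0
  have "(s1 @ replicate m False = replicate (N + m) False) \<longleftrightarrow> s1 = replicate N False"
    using 0 by (simp add: replicate_add)
  then show ?case unfolding allUp_def by simp
next
  case (Suc t)
  define PhiM where "PhiM = act_seq (N+m) (\<lambda>j. opB (v j) (q j) (ws @ tws)) (allUp (N+m)) [1..<t+1]"
  define PhiN where "PhiN = act_seq N (\<lambda>j. opB (v j) (q j) ws) (allUp N) [1..<t+1]"
  define C where "C = (\<Prod>j\<in>{1..t}. prod_list (map (\<lambda>wr. brk (v j - fst wr - (snd wr - q j))) tws))"
  define Pt where "Pt = prod_list (map (\<lambda>wr. brk (v (Suc t) - fst wr - (snd wr - q (Suc t)))) tws)"
  let ?B = "mono (v (Suc t)) (q (Suc t))"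
  have up: "[1..<Suc t + 1] = [1..<t+1] @ [Suc t]" by simp
  have "act_seq (N+m) (\<lambda>j. opB (v j) (q j) (ws @ tws)) (allUp (N+m)) [1..<Suc t+1] (s1 @ replicate m False)
     = (\<Sum>s\<in>{xs. length xs = N + m}. ?B (ws @ tws) False True (s1 @ replicate m False) s * PhiM s)"
    unfolding up foldl_append PhiM_def by (simp add: actOp_def opB_def)
  also have "\<dots> = (\<Sum>s\<in>{xs. length xs = N}. ?B (ws @ tws) False True (s1 @ replicate m False) (s @ replicate m False)
      * PhiM (s @ replicate m False))"
  proof (rule sum_configs_up_tail)
    fix s :: "bool list" assume "length s = N + m" "drop N s \<noteq> replicate m False"
    then show "?B (ws @ tws) False True (s1 @ replicate m False) s * PhiM s = 0"
      using mono_B_append_up_chain[OF assms(1,2) Suc.prems, of "take N s" _ _ "drop N s"] by simp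
  qed
  also have "\<dots> = (\<Sum>s\<in>{xs. length xs = N}. Pt * C * (?B ws False True s1 s * PhiN s))"
    using Suc.IH unfolding PhiM_def PhiN_def C_def
    by (intro sum.cong refl) (simp add: mono_B_append_up_chain[OF assms(1,2) Suc.prems] Pt_def)
  also have "\<dots> = Pt * C * act_seq N (\<lambda>j. opB (v j) (q j) ws) (allUp N) [1..<Suc t+1] s1"
    unfolding up foldl_append PhiN_def by (simp add: actOp_def opB_def sum_distrib_left)
  also have "Pt * C = (\<Prod>j\<in>{1..Suc t}. prod_list (map (\<lambda>wr. brk (v j - fst wr - (snd wr - q j))) tws))"
    unfolding Pt_def C_def by (simp add: prod.cl_ivl_Suc)
  finally show ?case .
qed

lemma Sfun_0:
  assumes "N \<le> M"
  shows "Sfun 0 u p N v q M w r = (\<Prod>j\<in>{1..N}. \<Prod>k\<in>{N+1..M}. brk (v j - w k + q j - r k)) * Zfun N v q w r"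
proof -
  define m where "m = M - N"
  define tws where "tws = drop N (sites M w r)"
  have M: "M = N + m" using assms unfolding m_def by simp
  have "take N (sites M w r) = sites N w r"
    unfolding sites_def using assms by (simp del: upt_Suc add: take_map take_upt)
  then have ws: "sites M w r = sites N w r @ tws"
    unfolding tws_def by (metis append_take_drop_id)
  have "Sfun 0 u p N v q M w r =
      act_seq (N+m) (\<lambda>j. opB (v j) (q j) (sites N w r @ tws)) (allUp (N+m)) [1..<N+1]
        (replicate N True @ replicate m False)"
    unfolding Sfun_def Let_def ws[symmetric] M[symmetric] m_def using assms by simp
  also have "\<dots> = (\<Prod>j\<in>{1..N}. prod_list (map (\<lambda>wr. brk (v j - fst wr - (snd wr - q j))) tws))
      * Zfun N v q w r"
    unfolding Zfun_def Let_def by (rule act_seq_B_append_up_chain) (simp_all add: M tws_def)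
  also have "(\<Prod>j\<in>{1..N}. prod_list (map (\<lambda>wr. brk (v j - fst wr - (snd wr - q j))) tws))
      = (\<Prod>j\<in>{1..N}. \<Prod>k\<in>{N+1..M}. brk (v j - w k + q j - r k))"
  proof -
    have "{N+1..<M+1} = {N+1..M}" by auto
    then show ?thesis unfolding tws_def prod_list_drop_sites by (simp add: algebra_simps)
  qed
  finally show ?thesis .
qed

theorem lemma14:
  fixes N M :: nat and u p v q w r :: "nat \<Rightarrow> complex"
  assumes "1 \<le> N" and "N \<le> M"
  shows "(\<forall>n. 1 \<le> n \<and> n \<le> N \<longrightarrow>
           (\<forall>j k. N - n + 1 \<le> j \<and> j \<le> M \<and> N - n + 1 \<le> k \<and> k \<le> M \<longrightarrow>
              Sfun n u p N v q M (w(j := w k, k := w j)) (r(j := r k, k := r j)) = Sfun n u p N v q M w r)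
         \<and> trig_poly (M - 1) (\<lambda>x. Sfun n (u(n := x)) p N v q M w r)
         \<and> (\<forall>j. 1 \<le> j \<and> j \<le> N - n \<longrightarrow> Sfun n (u(n := p n + w j + r j)) p N v q M w r = 0)
         \<and> (\<forall>x. x + p n = w (N - n + 1) + r (N - n + 1) \<longrightarrow>
              Sfun n (u(n := x)) p N v q M w r =
                sqbrk2 (p n) * sqbrk2 (r (N - n + 1))
                * (\<Prod>j\<in>{1..<N - n + 1}. brk (w j - w (N - n + 1) + r j - r (N - n + 1) + 2 * p n))
                * (\<Prod>j\<in>{N - n + 1<..M}. brk (w (N - n + 1) - w j + r j + r (N - n + 1)))
                * Sfun (n - 1) u p N v q M w r))
       \<and> Sfun 0 u p N v q M w r =
           (\<Prod>j\<in>{1..N}. \<Prod>k\<in>{N+1..M}. brk (v j - w k + q j - r k)) * Zfun N v q w r"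
  by (intro conjI allI impI; (elim conjE)?;
      rule Sfun_swap_sites Sfun_trig_poly Sfun_vanishes Sfun_recursion Sfun_0; simp add: assms)

end
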